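(* In the setting below, for every $p\ge1$ and $n\ge1$ the minimization problem $$\inf_{\lambda\in\mathbb R^{A^{\otimes d}_{p,n}},\ \lambda_0=0} V_{p,n}(\lambda)$$ has at least one solution.
   Context: Let $T>0$, let $B=(B^1,\dots,B^d)$ be a $d$-dimensional standard Brownian motion on $(\Omega,\mathcal F,\mathbb P)$ and $(\mathcal F_t)_{0\le t\le T}$ its natural augmented filtration. Let $(Z_t)_{0\le t\le T}$ be a real-valued adapted process with right-continuous paths and $\sup_{t\in[0,T]}|Z_t|\in L^2$ (the discounted payoff). Let $n\ge1$, $h=T/n$, $t_k=kh$, and $G^j_i=(B^j_{t_i}-B^j_{t_{i-1}})/\sqrt h$ for $1\le i\le n$, $1\le j\le d$. With $H_m$ the Hermite polynomials $H_0=1$, $H_m(x)=(-1)^m e^{x^2/2}\frac{d^m}{dx^m}e^{-x^2/2}$, and $\alpha=(\alpha^j_i)\in(\mathbb N^n)^d$, set $\widehat H^{\otimes d}_\alpha(G)=\prod_{j=1}^d\prod_{i=1}^nH_{\alpha^j_i}(G^j_i)$, $\|\alpha\|_1=\sum_{i,j}\alpha^j_i$, $A^{\otimes d}_{p,n}=\{\alpha:\|\alpha\|_1\le p\}$, and $A^{\otimes d,k}_{p,n}=\{\alpha\in A^{\otimes d}_{p,n}:\alpha^j_\ell=0\ \forall j,\ \forall \ell>k\}$ (so $A^{\otimes d,0}_{p,n}=\{0\}$). For $\lambda\in\mathbb R^{A^{\otimes d}_{p,n}}$, $\lambda_0$ denotes the coefficient of the zero multi-index. Define, for $0\le k\le n$,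 $$v_{p,n}(\lambda,k;Z,G)=Z_{t_k}-\sum_{\alpha\in A^{\otimes d,k}_{p,n}}\lambda_\alpha\widehat H^{\otimes d}_\alpha(G)\quad\Big(=Z_{t_k}-\mathbb E\Big[\textstyle\sum_{\alpha\in A^{\otimes d}_{p,n}}\lambda_\alpha\widehat H^{\otimes d}_\alpha(G)\,\Big|\,\mathcal F_{t_k}\Big]\Big),$$ and $V_{p,n}(\lambda)=\mathbb E\big[\max_{0\le k\le n}v_{p,n}(\lambda,k;Z,G)\big]$. *)

theory Defs
  imports "HOL-Probability.Probability"
begin

definition hermite :: "nat \<Rightarrow> real \<Rightarrow> real" where
  "hermite m x = (-1) ^ m * exp (x^2 / 2) * (deriv ^^ m) (\<lambda>y. exp (- (y^2) / 2)) x"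

definition std_BM :: "'a measure \<Rightarrow> nat \<Rightarrow> real \<Rightarrow> (nat \<Rightarrow> real \<Rightarrow> 'a \<Rightarrow> real) \<Rightarrow> bool" where
  "std_BM M d T B \<longleftrightarrow>
     (\<forall>j<d. \<forall>t\<in>{0..T}. B j t \<in> borel_measurable M) \<and>
     (\<forall>j<d. AE \<omega> in M. B j 0 \<omega> = 0) \<and>
     (\<forall>j<d. AE \<omega> in M. continuous_on {0..T} (\<lambda>t. B j t \<omega>)) \<and>
     (\<forall>(ts :: nat \<Rightarrow> real) m. (\<forall>i<m. ts i < ts (Suc i)) \<and> 0 \<le> ts 0 \<and> ts m \<le> T \<longrightarrow>
        prob_space.indep_vars M (\<lambda>_. borel)
          (\<lambda>(j, i) \<omega>. B j (ts (Suc i)) \<omega> - B j (ts i) \<omega>) ({..<d} \<times> {..<m}) \<and>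
        (\<forall>j<d. \<forall>i<m. distributed M lborel (\<lambda>\<omega>. B j (ts (Suc i)) \<omega> - B j (ts i) \<omega>)
                          (normal_density 0 (sqrt (ts (Suc i) - ts i)))))"

definition BM_filtration :: "'a measure \<Rightarrow> nat \<Rightarrow> (nat \<Rightarrow> real \<Rightarrow> 'a \<Rightarrow> real) \<Rightarrow> real \<Rightarrow> 'a measure" where
  "BM_filtration M d B t = sigma (space M)
     ({B j s -` A \<inter> space M | j s A. j < d \<and> s \<in> {0..t} \<and> A \<in> sets borel} \<union> null_sets M)"

definition grid :: "real \<Rightarrow> nat \<Rightarrow> nat \<Rightarrow> real" where
  "grid T n k = real k * (T / real n)"

definition Gincr :: "(nat \<Rightarrow> real \<Rightarrow> 'a \<Rightarrow> real) \<Rightarrow> real \<Rightarrow> nat \<Rightarrow> nat \<Rightarrow> nat \<Rightarrow> 'a \<Rightarrow> real" where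
  "Gincr B T n j i \<omega> = (B j (grid T n i) \<omega> - B j (grid T n (i - 1)) \<omega>) / sqrt (T / real n)"

text \<open>Multi-indices alpha = (alpha^j_i), j < d, 1 <= i <= n, represented as functions
  alpha j i vanishing outside that range.\<close>
definition mindex_set :: "nat \<Rightarrow> nat \<Rightarrow> nat \<Rightarrow> (nat \<Rightarrow> nat \<Rightarrow> nat) set" where
  "mindex_set d p n = {\<alpha>. (\<forall>j i. \<alpha> j i \<noteq> 0 \<longrightarrow> j < d \<and> 1 \<le> i \<and> i \<le> n) \<and>
                          (\<Sum>j<d. \<Sum>i=1..n. \<alpha> j i) \<le> p}"

definition mindex_set_k :: "nat \<Rightarrow> nat \<Rightarrow> nat \<Rightarrow> nat \<Rightarrow> (nat \<Rightarrow> nat \<Rightarrow> nat) set" where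
  "mindex_set_k d p n k = {\<alpha> \<in> mindex_set d p n. \<forall>j i. k < i \<longrightarrow> \<alpha> j i = 0}"

definition zero_mindex :: "nat \<Rightarrow> nat \<Rightarrow> nat" where
  "zero_mindex = (\<lambda>_ _. 0)"

definition hermite_prod :: "nat \<Rightarrow> nat \<Rightarrow> (nat \<Rightarrow> real \<Rightarrow> 'a \<Rightarrow> real) \<Rightarrow> real \<Rightarrow> (nat \<Rightarrow> nat \<Rightarrow> nat) \<Rightarrow> 'a \<Rightarrow> real" where
  "hermite_prod d n B T \<alpha> \<omega> = (\<Prod>j<d. \<Prod>i=1..n. hermite (\<alpha> j i) (Gincr B T n j i \<omega>))"

definition v_pn :: "nat \<Rightarrow> (nat \<Rightarrow> real \<Rightarrow> 'a \<Rightarrow> real) \<Rightarrow> real \<Rightarrow> (real \<Rightarrow> 'a \<Rightarrow> real) \<Rightarrow> nat \<Rightarrow> nat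
     \<Rightarrow> ((nat \<Rightarrow> nat \<Rightarrow> nat) \<Rightarrow> real) \<Rightarrow> nat \<Rightarrow> 'a \<Rightarrow> real" where
  "v_pn d B T Z p n lam k \<omega> = Z (grid T n k) \<omega>
      - (\<Sum>\<alpha>\<in>mindex_set_k d p n k. lam \<alpha> * hermite_prod d n B T \<alpha> \<omega>)"

definition V_pn :: "'a measure \<Rightarrow> nat \<Rightarrow> (nat \<Rightarrow> real \<Rightarrow> 'a \<Rightarrow> real) \<Rightarrow> real \<Rightarrow> (real \<Rightarrow> 'a \<Rightarrow> real)
     \<Rightarrow> nat \<Rightarrow> nat \<Rightarrow> ((nat \<Rightarrow> nat \<Rightarrow> nat) \<Rightarrow> real) \<Rightarrow> real" where
  "V_pn M d B T Z p n lam = (\<integral>\<omega>. Max ((\<lambda>k. v_pn d B T Z p n lam k \<omega>) ` {0..n}) \<partial>M)"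

end

theory Submission
  imports Defs "HOL-Computational_Algebra.Polynomial"
begin

text \<open>
  The objective V is Lipschitz in the coefficients lambda, for the l1 norm weighted by
  E |H_alpha(G)|, so only coercivity on the subspace lambda_0 = 0 is at stake.  Keeping the terms
  k = 0 and k = n of the maximum gives V(lambda) >= E[(X_lambda)^-] - E|Z_0| - E|Z_T|, where
  X_lambda is the Hermite combination sum_alpha lambda_alpha H_alpha(G).  The map
  lambda -> E[(X_lambda)^-] is continuous and positively homogeneous, and it is positive for
  lambda <> 0: X_lambda is centred, and it is not a.s. zero because the Hermite products are
  orthogonal in L2 with positive norms.  Minimizing it over the compact l1 unit sphere yields a
  bound c |lambda|_1, so V is coercive and attains its infimum.
\<close>

section \<open>Hermite polynomials and Gaussian integration\<close>

fun hermite_poly :: "nat \<Rightarrow> real poly" where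
  "hermite_poly 0 = 1"
| "hermite_poly (Suc m) = pCons 0 (hermite_poly m) - pderiv (hermite_poly m)"

lemma higher_deriv_gaussian:
  "(deriv ^^ m) (\<lambda>y. exp (- (y^2) / 2)) = (\<lambda>x. (-1)^m * poly (hermite_poly m) x * exp (- (x^2) / 2))"
proof (induction m)
  case 0
  then show ?case by simp
next
  case (Suc m)
  have "((\<lambda>x. (-1)^m * poly (hermite_poly m) x * exp (- (x^2) / 2)) has_real_derivative
         (-1)^(Suc m) * poly (hermite_poly (Suc m)) x * exp (- (x^2) / 2)) (at x)" for x
    by (rule DERIV_cong, (auto intro!: derivative_eq_intros poly_DERIV)[1])
       (simp add: algebra_simps power2_eq_square)
  then show ?case
    by (simp only: funpow.simps comp_def Suc.IH) (rule ext, rule DERIV_imp_deriv)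
qed

lemma hermite_eq_poly: "hermite m x = poly (hermite_poly m) x"
proof -
  have "exp (x^2/2) * exp (- (x^2) / 2) = 1"
    by (simp add: exp_add[symmetric])
  then show ?thesis
    unfolding hermite_def higher_deriv_gaussian
    by (simp add: algebra_simps power_mult_distrib[symmetric])
qed

lemma hermite_poly_monic: "degree (hermite_poly m) = m \<and> coeff (hermite_poly m) m = 1"
proof (induction m)
  case 0
  then show ?case by simp
next
  case (Suc m)
  have "degree (pCons 0 (hermite_poly m)) = Suc m"
    using Suc by (auto simp: degree_pCons_eq)
  moreover have "degree (pderiv (hermite_poly m)) < Suc m"
    using Suc by (simp add: degree_pderiv)
  ultimately show ?case
    using Suc degree_add_eq_left[of "- pderiv (hermite_poly m)" "pCons 0 (hermite_poly m)"]
    by (simp add: coeff_eq_0)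
qed

lemma hermite_poly_eq_monom_plus_lower:
  obtains r where "hermite_poly m = monom 1 m + r" "degree r < m \<or> r = 0"
proof
  let ?r = "hermite_poly m - monom 1 m"
  have "coeff ?r m = 0" "degree ?r \<le> m"
    using hermite_poly_monic[of m] by (auto intro: degree_diff_le simp: degree_monom_le)
  then show "degree ?r < m \<or> ?r = 0"
    by (metis leading_coeff_0_iff le_neq_implies_less)
qed simp

lemma std_normal_moment_Suc:
  "(\<integral>x. std_normal_density x * x ^ Suc k \<partial>lborel) =
     real k * (\<integral>x. std_normal_density x * x ^ (k - 1) \<partial>lborel)"
proof (cases "even k")
  case True
  then obtain j where k: "k = 2 * j" by blast
  then show ?thesis
    using integral_std_normal_moment_odd[of j] integral_std_normal_moment_odd[of "j - 1"]
    by (cases j) simp_all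
next
  case False
  then obtain j where k: "k = 2 * j + 1" by (metis oddE)
  have "fact (2 * Suc j) / (2 ^ Suc j * fact (Suc j)) =
        (2 * real j + 1) * fact (2 * j) * (2 * (real j + 1)) / (2 ^ j * fact j * (2 * (real j + 1)))"
    by (simp add: algebra_simps)
  also have "\<dots> = (2 * real j + 1) * fact (2 * j) / (2 ^ j * fact j)"
    by (rule nonzero_mult_divide_mult_cancel_right) simp
  finally show ?thesis
    using integral_std_normal_moment_even[of "Suc j"] integral_std_normal_moment_even[of j]
    by (simp add: k)
qed

lemma borel_measurable_poly [measurable]: "poly q \<in> borel_measurable borel"
  for q :: "real poly"
  by (intro borel_measurable_continuous_onI continuous_intros)

definition gauss_mean :: "real poly \<Rightarrow> real" where
  "gauss_mean q = (\<integral>x. std_normal_density x * poly q x \<partial>lborel)"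

lemma integrable_std_normal_poly: "integrable lborel (\<lambda>x. std_normal_density x * poly q x)"
proof -
  have "(\<lambda>x. std_normal_density x * poly q x) =
        (\<lambda>x. \<Sum>i\<le>degree q. coeff q i * (std_normal_density x * x ^ i))"
    by (simp add: poly_altdef sum_distrib_left algebra_simps)
  then show ?thesis
    by (simp add: integrable_std_normal_moment)
qed

lemma gauss_mean_0 [simp]: "gauss_mean 0 = 0"
  by (simp add: gauss_mean_def)

lemma gauss_mean_diff: "gauss_mean (q - r) = gauss_mean q - gauss_mean r"
  unfolding gauss_mean_def by (simp add: right_diff_distrib integrable_std_normal_poly)

lemma gauss_mean_sum: "gauss_mean (\<Sum>i\<in>A. q i) = (\<Sum>i\<in>A. gauss_mean (q i))"
  unfolding gauss_mean_def poly_sum sum_distrib_left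
  by (simp add: integrable_std_normal_poly)

lemma gauss_mean_monom:
  "gauss_mean (monom c k) = c * (\<integral>x. std_normal_density x * x ^ k \<partial>lborel)"
  unfolding gauss_mean_def by (simp add: poly_monom algebra_simps)

text \<open>Gaussian integration by parts, \<open>E[u'(G)] = E[G u(G)]\<close>; on monomials it is the moment recursion.\<close>
lemma gauss_mean_pderiv: "gauss_mean (pderiv u) = gauss_mean (pCons 0 u)"
proof -
  have monom: "gauss_mean (pderiv (monom c k)) = gauss_mean (pCons 0 (monom c k))" for c k
    unfolding pderiv_monom monom_Suc[symmetric] gauss_mean_monom std_normal_moment_Suc by simp
  have "gauss_mean (pderiv (\<Sum>i\<in>A. monom (c i) i)) = gauss_mean (pCons 0 (\<Sum>i\<in>A. monom (c i) i))"
    for A c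
  proof -
    have "pCons 0 (\<Sum>i\<in>A. monom (c i) i) = [:0, 1:] * (\<Sum>i\<in>A. monom (c i) i)"
      by simp
    moreover have "pderiv (\<Sum>i\<in>A. monom (c i) i) = (\<Sum>i\<in>A. pderiv (monom (c i) i))"
      using higher_pderiv_sum[of 1] by simp
    ultimately show ?thesis
      by (simp add: sum_distrib_left gauss_mean_sum monom)
  qed
  from this[where A = "{..degree u}" and c = "coeff u"] show ?thesis
    by (simp only: poly_as_sum_of_monoms)
qed

lemma gauss_mean_mult_hermite_Suc:
  "gauss_mean (q * hermite_poly (Suc m)) = gauss_mean (pderiv q * hermite_poly m)"
proof -
  have "pderiv (q * hermite_poly m) - pCons 0 (q * hermite_poly m) =
        pderiv q * hermite_poly m - q * hermite_poly (Suc m)"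
    by (simp add: pderiv_mult algebra_simps)
  then have "gauss_mean (pderiv q * hermite_poly m) - gauss_mean (q * hermite_poly (Suc m)) =
             gauss_mean (pderiv (q * hermite_poly m)) - gauss_mean (pCons 0 (q * hermite_poly m))"
    by (simp only: flip: gauss_mean_diff)
  then show ?thesis
    using gauss_mean_pderiv[of "q * hermite_poly m"] by linarith
qed

lemma gauss_mean_mult_hermite:
  "gauss_mean (q * hermite_poly m) = gauss_mean ((pderiv ^^ m) q)"
  by (induction m arbitrary: q)
     (simp_all add: gauss_mean_mult_hermite_Suc funpow_Suc_right del: hermite_poly.simps(2) funpow.simps(2))

lemma higher_pderiv_eq_0:
  fixes q :: "real poly"
  assumes "degree q < m"
  shows "(pderiv ^^ m) q = 0"
proof -
  obtain m' where m: "m = Suc m'" using assms by (cases m) auto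
  have "degree ((pderiv ^^ m') q) = 0"
    using assms by (simp add: m degree_higher_pderiv)
  then show ?thesis
    by (simp add: m pderiv_eq_0_iff)
qed

lemma higher_pderiv_monom_self: "(pderiv ^^ m) (monom c m) = [:fact m * c :: real:]"
  by (induction m arbitrary: c)
     (simp_all add: funpow_Suc_right pderiv_monom monom_0 algebra_simps del: funpow.simps)

lemma gauss_mean_hermite_mult_hermite:
  "gauss_mean (hermite_poly a * hermite_poly b) = (if a = b then fact a else 0)"
proof -
  have lower: "gauss_mean (hermite_poly a * hermite_poly b) = 0" if "a < b" for a b
    using that hermite_poly_monic[of a]
    by (simp add: gauss_mean_mult_hermite higher_pderiv_eq_0 del: hermite_poly.simps)
  obtain r where r: "hermite_poly a = monom 1 a + r" "degree r < a \<or> r = 0"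
    by (rule hermite_poly_eq_monom_plus_lower)
  have "(pderiv ^^ a) (hermite_poly a) = [:fact a:]"
    using r by (auto simp: higher_pderiv_add higher_pderiv_eq_0 higher_pderiv_monom_self
                     simp del: hermite_poly.simps)
  then have diagonal: "gauss_mean (hermite_poly a * hermite_poly a) = fact a"
    using gauss_mean_monom[of "fact a" 0] by (simp add: gauss_mean_mult_hermite monom_0)
  show ?thesis
    using lower[of a b] lower[of b a] diagonal
    by (cases a b rule: linorder_cases) (simp_all add: mult.commute)
qed

section \<open>Coercive functions of finitely many coordinates\<close>

definition zero_outside :: "'b set \<Rightarrow> ('b \<Rightarrow> real) \<Rightarrow> 'b \<Rightarrow> real" where
  "zero_outside S l = (\<lambda>a. if a \<in> S then l a else 0)"

definition coord_box :: "'b set \<Rightarrow> real \<Rightarrow> ('b \<Rightarrow> real) set" where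
  "coord_box S R = (\<Pi>\<^sub>E a\<in>UNIV. if a \<in> S then {-R..R} else {0})"

lemma zero_outside_idem [simp]: "zero_outside S (zero_outside S l) = zero_outside S l"
  by (simp add: zero_outside_def fun_eq_iff)

lemma zero_outside_eq_self: "(\<And>a. a \<notin> S \<Longrightarrow> l a = 0) \<Longrightarrow> zero_outside S l = l"
  by (auto simp: zero_outside_def)

lemma mem_coord_box: "l \<in> coord_box S R \<longleftrightarrow> (\<forall>a\<in>S. \<bar>l a\<bar> \<le> R) \<and> (\<forall>a. a \<notin> S \<longrightarrow> l a = 0)"
  by (auto simp: coord_box_def PiE_def Pi_def abs_le_iff split: if_splits)

lemma compact_coord_box: "compact (coord_box S R)"
proof -
  have "compactin (product_topology (\<lambda>_. euclidean) UNIV)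
          (\<Pi>\<^sub>E a\<in>UNIV. if a \<in> S then {-R..R} else {0::real})"
    by (subst compactin_PiE) auto
  then show ?thesis
    by (simp add: coord_box_def euclidean_product_topology)
qed

lemma sum_abs_diff_zero_outside:
  assumes "finite A" "S \<subseteq> A"
  shows "(\<Sum>a\<in>A. \<bar>zero_outside S l a - zero_outside S m a\<bar> * w a) = (\<Sum>a\<in>S. w a * \<bar>l a - m a\<bar>)"
proof -
  have "(\<Sum>a\<in>A. \<bar>zero_outside S l a - zero_outside S m a\<bar> * w a) =
        (\<Sum>a\<in>S. \<bar>zero_outside S l a - zero_outside S m a\<bar> * w a)"
    using assms by (intro sum.mono_neutral_right) (auto simp: zero_outside_def)
  then show ?thesis
    by (simp add: zero_outside_def mult.commute)
qed

lemma continuous_on_weighted_l1_lipschitz: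
  fixes F :: "('b \<Rightarrow> real) \<Rightarrow> real"
  assumes lip: "\<And>l m. \<bar>F l - F m\<bar> \<le> (\<Sum>a\<in>S. w a * \<bar>l a - m a\<bar>)"
  shows "continuous_on K F"
  unfolding continuous_on_def
proof (intro ballI)
  fix x assume "x \<in> K"
  let ?g = "\<lambda>y. \<Sum>a\<in>S. w a * \<bar>y a - x a\<bar>"
  have "continuous_on UNIV ?g"
    by (intro continuous_intros continuous_on_product_coordinates)
  then have "(?g \<longlongrightarrow> 0) (at x within K)"
    using continuous_on_tendsto_compose[of UNIV ?g "\<lambda>y. y" x "at x within K"]
    by simp
  then have "((\<lambda>y. F y - F x) \<longlongrightarrow> 0) (at x within K)"
    by (rule Lim_null_comparison[rotated]) (simp add: lip)
  then show "(F \<longlongrightarrow> F x) (at x within K)"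
    by (simp add: Lim_null[symmetric])
qed

lemma positive_homogeneous_ge_l1_norm:
  fixes f :: "('b \<Rightarrow> real) \<Rightarrow> real"
  assumes fin: "finite S"
    and local: "\<And>l. f l = f (zero_outside S l)"
    and cont: "continuous_on UNIV f"
    and hom: "\<And>t l. t \<ge> 0 \<Longrightarrow> f (\<lambda>a. t * l a) = t * f l"
    and pos: "\<And>l. \<exists>a\<in>S. l a \<noteq> 0 \<Longrightarrow> f l > 0"
  shows "\<exists>c>0. \<forall>l. c * (\<Sum>a\<in>S. \<bar>l a\<bar>) \<le> f l"
proof (cases "S = {}")
  case True
  then show ?thesis
    using hom[of 0] local by (intro exI[of _ 1]) (simp add: zero_outside_def)
next
  case False
  then obtain a0 where a0: "a0 \<in> S" by blast
  define sphere where "sphere = coord_box S 1 \<inter> {l. (\<Sum>a\<in>S. \<bar>l a\<bar>) = 1}"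
  have "compact sphere"
    unfolding sphere_def
    by (intro compact_Int_closed compact_coord_box closed_Collect_eq continuous_intros
          continuous_on_product_coordinates)
  moreover have "(\<lambda>a. if a = a0 then 1 else 0) \<in> sphere"
    using a0 fin by (simp add: sphere_def mem_coord_box if_distrib[of abs] cong: if_cong)
  then have "sphere \<noteq> {}" by blast
  ultimately obtain l0 where l0: "l0 \<in> sphere" "\<And>l. l \<in> sphere \<Longrightarrow> f l0 \<le> f l"
    using continuous_attains_inf[of sphere f] continuous_on_subset[OF cont] by blast
  have "\<exists>a\<in>S. l0 a \<noteq> 0"
  proof (rule ccontr)
    assume "\<not> ?thesis"
    then have "(\<Sum>a\<in>S. \<bar>l0 a\<bar>) = 0" by simp
    with l0(1) show False by (simp add: sphere_def)
  qed
  then have "f l0 > 0" by (rule pos)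
  moreover have "f l0 * (\<Sum>a\<in>S. \<bar>l a\<bar>) \<le> f l" for l
  proof (cases "(\<Sum>a\<in>S. \<bar>l a\<bar>) = 0")
    case True
    then have "zero_outside S l = (\<lambda>a. 0 * l a)"
      using fin by (auto simp: zero_outside_def fun_eq_iff sum_nonneg_eq_0_iff)
    then show ?thesis
      using True local[of l] hom[of 0 l] by simp
  next
    case False
    define s where "s = (\<Sum>a\<in>S. \<bar>l a\<bar>)"
    have s: "s > 0"
      using False by (simp add: s_def sum_nonneg order_le_neq_trans)
    define l' where "l' a = zero_outside S l a / s" for a
    have "\<bar>l a\<bar> \<le> s" if "a \<in> S" for a
      unfolding s_def using that fin by (intro member_le_sum) auto
    then have "l' \<in> sphere"
      using s by (auto simp: sphere_def mem_coord_box l'_def zero_outside_def s_def[symmetric]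
                     sum_divide_distrib[symmetric])
    moreover have "zero_outside S l = (\<lambda>a. s * l' a)"
      using s by (simp add: l'_def fun_eq_iff)
    ultimately show ?thesis
      using l0(2) local[of l] hom[of s l'] s by (simp add: s_def[symmetric] mult.commute)
  qed
  ultimately show ?thesis by blast
qed

lemma coercive_attains_min:
  fixes F :: "('b \<Rightarrow> real) \<Rightarrow> real"
  assumes fin: "finite S"
    and local: "\<And>l. F l = F (zero_outside S l)"
    and cont: "continuous_on UNIV F"
    and coercive: "\<And>l. c * (\<Sum>a\<in>S. \<bar>l a\<bar>) - C \<le> F l" and c: "c > 0"
  obtains l0 where "\<And>a. a \<notin> S \<Longrightarrow> l0 a = 0" "\<And>l. F l0 \<le> F l"
proof -
  define R where "R = (\<bar>C\<bar> + \<bar>F (\<lambda>a. 0)\<bar>) / c + 1"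
  have "R > 0"
    using c by (simp add: R_def add_nonneg_pos)
  have "c * R = \<bar>C\<bar> + \<bar>F (\<lambda>a. 0)\<bar> + c"
    using c by (simp add: R_def field_simps)
  then have "F (\<lambda>a. 0) < c * R - C"
    using c by linarith
  have "(\<lambda>a. 0) \<in> coord_box S R"
    using \<open>R > 0\<close> by (simp add: mem_coord_box)
  then obtain l0 where l0: "l0 \<in> coord_box S R" "\<And>l. l \<in> coord_box S R \<Longrightarrow> F l0 \<le> F l"
    using continuous_attains_inf[OF compact_coord_box _ continuous_on_subset[OF cont]] by blast
  have "F l0 \<le> F l" for l
  proof (cases "zero_outside S l \<in> coord_box S R")
    case True
    then show ?thesis using l0(2) local[of l] by simp
  next
    case False
    then obtain a where a: "a \<in> S" "R < \<bar>l a\<bar>"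
      by (auto simp: mem_coord_box zero_outside_def)
    have "\<bar>l a\<bar> \<le> (\<Sum>a\<in>S. \<bar>l a\<bar>)"
      using a fin by (intro member_le_sum) auto
    then have "c * R < c * (\<Sum>a\<in>S. \<bar>l a\<bar>)"
      using a c by simp
    then have "F (\<lambda>a. 0) < F l"
      using coercive[of l] \<open>F (\<lambda>a. 0) < c * R - C\<close> by linarith
    then show ?thesis
      using l0(2)[OF \<open>(\<lambda>a. 0) \<in> coord_box S R\<close>] by linarith
  qed
  then show thesis
    using l0(1) that by (auto simp: mem_coord_box)
qed

section \<open>Hermite functionals of the Brownian increments\<close>

locale brownian_grid = prob_space M for M :: "'a measure" +
  fixes d n :: nat and T :: real and B :: "nat \<Rightarrow> real \<Rightarrow> 'a \<Rightarrow> real"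
  assumes T_pos: "T > 0" and n_pos: "n \<ge> 1" and brownian: "std_BM M d T B"
begin

definition cells :: "(nat \<times> nat) set" where
  "cells = {..<d} \<times> {..<n}"

definition grid_incr :: "nat \<times> nat \<Rightarrow> 'a \<Rightarrow> real" where
  "grid_incr = (\<lambda>(j, i) \<omega>. B j (grid T n (Suc i)) \<omega> - B j (grid T n i) \<omega>)"

definition gauss_incr :: "nat \<times> nat \<Rightarrow> 'a \<Rightarrow> real" where
  "gauss_incr c \<omega> = grid_incr c \<omega> / sqrt (T / n)"

text \<open>Cell \<open>(j, i)\<close> carries the increment over \<open>[t\<^sub>i, t\<^sub>i\<^sub>+\<^sub>1]\<close>, i.e. \<open>G\<^sup>j\<^sub>i\<^sub>+\<^sub>1\<close> in the indexing of \<open>Gincr\<close>.\<close>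
lemma Gincr_eq_gauss_incr: "Gincr B T n j (Suc i) \<omega> = gauss_incr (j, i) \<omega>"
  by (simp add: Gincr_def gauss_incr_def grid_incr_def)

lemma finite_cells [simp]: "finite cells"
  by (simp add: cells_def)

lemma grid_incr_law:
  "indep_vars (\<lambda>_. borel) grid_incr cells \<and>
   (\<forall>c\<in>cells. distributed M lborel (grid_incr c) (normal_density 0 (sqrt (T / n))))"
proof -
  have step: "grid T n (Suc i) - grid T n i = T / n" for i
    by (simp add: grid_def algebra_simps add_divide_distrib)
  have "T / n > 0"
    using T_pos n_pos by simp
  then have "\<forall>i<n. grid T n i < grid T n (Suc i)"
    using step by (metis diff_gt_0_iff_gt)
  moreover have "0 \<le> grid T n 0" "grid T n n \<le> T"
    using n_pos by (simp_all add: grid_def)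
  ultimately have "indep_vars (\<lambda>_. borel)
      (\<lambda>(j, i) \<omega>. B j (grid T n (Suc i)) \<omega> - B j (grid T n i) \<omega>) ({..<d} \<times> {..<n}) \<and>
    (\<forall>j<d. \<forall>i<n. distributed M lborel (\<lambda>\<omega>. B j (grid T n (Suc i)) \<omega> - B j (grid T n i) \<omega>)
       (normal_density 0 (sqrt (grid T n (Suc i) - grid T n i))))"
    using brownian unfolding std_BM_def by blast
  then show ?thesis
    by (auto simp: grid_incr_def cells_def step)
qed

lemma distributed_gauss_incr:
  assumes "c \<in> cells"
  shows "distributed M lborel (gauss_incr c) std_normal_density"
proof -
  have "T / n > 0"
    using T_pos n_pos by simp
  then show ?thesis
    using normal_standard_normal_convert[of "sqrt (T / n)" "grid_incr c" 0] grid_incr_law assms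
    by (simp add: gauss_incr_def[abs_def])
qed

lemma indep_poly_gauss_incr: "indep_vars (\<lambda>_. borel) (\<lambda>c \<omega>. poly (q c) (gauss_incr c \<omega>)) cells"
proof -
  have "indep_vars (\<lambda>_. borel) (\<lambda>c \<omega>. (\<lambda>x. poly (q c) (x / sqrt (T / n))) (grid_incr c \<omega>)) cells"
    by (rule indep_vars_compose2[OF conjunct1[OF grid_incr_law]]) measurable
  then show ?thesis
    by (simp add: gauss_incr_def)
qed

lemma integrable_poly_gauss_incr:
  assumes "c \<in> cells"
  shows "integrable M (\<lambda>\<omega>. poly q (gauss_incr c \<omega>))"
  using distributed_integrable[OF distributed_gauss_incr[OF assms], of "poly q"]
    integrable_std_normal_poly[of q] by simp

lemma integral_poly_gauss_incr:
  assumes "c \<in> cells"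
  shows "(\<integral>\<omega>. poly q (gauss_incr c \<omega>) \<partial>M) = gauss_mean q"
  using distributed_integral[OF distributed_gauss_incr[OF assms], of "poly q"]
  by (simp add: gauss_mean_def)

lemma integrable_prod_poly_gauss_incr:
  "integrable M (\<lambda>\<omega>. \<Prod>c\<in>cells. poly (q c) (gauss_incr c \<omega>))"
  by (rule indep_vars_integrable[OF finite_cells indep_poly_gauss_incr integrable_poly_gauss_incr])

lemma integral_prod_poly_gauss_incr:
  "(\<integral>\<omega>. (\<Prod>c\<in>cells. poly (q c) (gauss_incr c \<omega>)) \<partial>M) = (\<Prod>c\<in>cells. gauss_mean (q c))"
  using indep_vars_lebesgue_integral[OF finite_cells indep_poly_gauss_incr integrable_poly_gauss_incr]
  by (simp add: integral_poly_gauss_incr)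

definition cell_index :: "(nat \<Rightarrow> nat \<Rightarrow> nat) \<Rightarrow> nat \<times> nat \<Rightarrow> nat" where
  "cell_index \<alpha> = (\<lambda>(j, i). \<alpha> j (Suc i))"

lemma hermite_prod_eq_prod_cells:
  "hermite_prod d n B T \<alpha> \<omega> = (\<Prod>c\<in>cells. poly (hermite_poly (cell_index \<alpha> c)) (gauss_incr c \<omega>))"
  unfolding hermite_prod_def hermite_eq_poly One_nat_def prod.atLeast1_atMost_eq Gincr_eq_gauss_incr
  unfolding cells_def prod.cartesian_product
  by (simp add: cell_index_def split_beta')

lemma integrable_hermite_prod: "integrable M (hermite_prod d n B T \<alpha>)"
  unfolding hermite_prod_eq_prod_cells by (rule integrable_prod_poly_gauss_incr)

lemma hermite_prod_mult_eq_prod_cells: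
  "hermite_prod d n B T \<alpha> \<omega> * hermite_prod d n B T \<beta> \<omega> =
     (\<Prod>c\<in>cells. poly (hermite_poly (cell_index \<alpha> c) * hermite_poly (cell_index \<beta> c)) (gauss_incr c \<omega>))"
  unfolding hermite_prod_eq_prod_cells prod.distrib[symmetric] by simp

lemma integrable_hermite_prod_mult:
  "integrable M (\<lambda>\<omega>. hermite_prod d n B T \<alpha> \<omega> * hermite_prod d n B T \<beta> \<omega>)"
  unfolding hermite_prod_mult_eq_prod_cells by (rule integrable_prod_poly_gauss_incr)

lemma integral_hermite_prod_mult:
  "(\<integral>\<omega>. hermite_prod d n B T \<alpha> \<omega> * hermite_prod d n B T \<beta> \<omega> \<partial>M) =
     (\<Prod>c\<in>cells. if cell_index \<alpha> c = cell_index \<beta> c then fact (cell_index \<alpha> c) else 0)"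
  unfolding hermite_prod_mult_eq_prod_cells integral_prod_poly_gauss_incr
  by (simp add: gauss_mean_hermite_mult_hermite)

end

lemma mindex_set_support:
  "\<alpha> \<in> mindex_set d p n \<Longrightarrow> \<alpha> j i \<noteq> 0 \<Longrightarrow> j < d \<and> 1 \<le> i \<and> i \<le> n"
  by (simp add: mindex_set_def)

lemma mindex_set_le: "\<alpha> \<in> mindex_set d p n \<Longrightarrow> \<alpha> j i \<le> p"
proof (cases "\<alpha> j i = 0")
  case False
  assume \<alpha>: "\<alpha> \<in> mindex_set d p n"
  with False have ji: "j < d" "i \<in> {1..n}"
    using mindex_set_support by auto
  have "\<alpha> j i \<le> (\<Sum>i=1..n. \<alpha> j i)"
    using ji by (intro member_le_sum) auto
  also have "\<dots> \<le> (\<Sum>j<d. \<Sum>i=1..n. \<alpha> j i)"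
    using ji by (intro member_le_sum[where f = "\<lambda>j. \<Sum>i=1..n. \<alpha> j i"]) auto
  also have "\<dots> \<le> p"
    using \<alpha> by (simp add: mindex_set_def)
  finally show ?thesis .
qed simp

lemma finite_mindex_set: "finite (mindex_set d p n)"
proof -
  let ?rows = "{g. \<forall>i. (i \<in> {1..n} \<longrightarrow> g i \<in> {..p}) \<and> (i \<notin> {1..n} \<longrightarrow> g i = 0)}"
  let ?matrices = "{\<alpha>. \<forall>j. (j \<in> {..<d} \<longrightarrow> \<alpha> j \<in> ?rows) \<and> (j \<notin> {..<d} \<longrightarrow> \<alpha> j = (\<lambda>_. 0))}"
  have "finite ?rows"
    by (intro finite_set_of_finite_funs) auto
  then have "finite ?matrices"
    by (intro finite_set_of_finite_funs) auto
  moreover have "\<alpha> \<in> ?matrices" if "\<alpha> \<in> mindex_set d p n" for \<alpha>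
    using mindex_set_le[OF that] mindex_set_support[OF that]
    by (auto simp: fun_eq_iff)
  ultimately show ?thesis
    by (meson finite_subset subsetI)
qed

lemma zero_mindex_in_mindex_set [simp]: "zero_mindex \<in> mindex_set d p n"
  by (simp add: mindex_set_def zero_mindex_def)

lemma mindex_set_k_subset: "mindex_set_k d p n k \<subseteq> mindex_set d p n"
  by (auto simp: mindex_set_k_def)

lemma mindex_set_k_0: "mindex_set_k d p n 0 = {zero_mindex}"
proof -
  have "\<alpha> = zero_mindex" if "\<alpha> \<in> mindex_set_k d p n 0" for \<alpha>
  proof -
    have "\<alpha> j i = 0" for j i
      using that mindex_set_support[of \<alpha> d p n j i] by (cases i) (auto simp: mindex_set_k_def)
    then show ?thesis
      by (auto simp: zero_mindex_def)
  qed
  moreover have "zero_mindex \<in> mindex_set_k d p n 0"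
    using zero_mindex_in_mindex_set by (simp add: mindex_set_k_def zero_mindex_def)
  ultimately show ?thesis by blast
qed

lemma mindex_set_k_self: "mindex_set_k d p n n = mindex_set d p n"
  using mindex_set_support by (fastforce simp: mindex_set_k_def)

context brownian_grid
begin

lemma cell_index_separates:
  assumes "\<alpha> \<in> mindex_set d p n" "\<beta> \<in> mindex_set d p n" "\<alpha> \<noteq> \<beta>"
  obtains c where "c \<in> cells" "cell_index \<alpha> c \<noteq> cell_index \<beta> c"
proof -
  obtain j i where ji: "\<alpha> j i \<noteq> \<beta> j i"
    using assms(3) by (meson ext)
  then have "j < d \<and> 1 \<le> i \<and> i \<le> n"
    using mindex_set_support[OF assms(1), of j i] mindex_set_support[OF assms(2), of j i] by metis
  then show thesis
    using ji by (intro that[of "(j, i - 1)"]) (auto simp: cell_index_def cells_def)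
qed

lemma integral_hermite_prod_orthogonal:
  assumes "\<alpha> \<in> mindex_set d p n" "\<beta> \<in> mindex_set d p n" "\<alpha> \<noteq> \<beta>"
  shows "(\<integral>\<omega>. hermite_prod d n B T \<alpha> \<omega> * hermite_prod d n B T \<beta> \<omega> \<partial>M) = 0"
  using cell_index_separates[OF assms] unfolding integral_hermite_prod_mult
  by (metis (mono_tags, lifting) finite_cells prod_zero)

lemma integral_hermite_prod_square_pos:
  "(\<integral>\<omega>. hermite_prod d n B T \<alpha> \<omega> * hermite_prod d n B T \<alpha> \<omega> \<partial>M) > 0"
  unfolding integral_hermite_prod_mult by (simp add: prod_pos)

lemma hermite_prod_zero_mindex [simp]: "hermite_prod d n B T zero_mindex \<omega> = 1"
  by (simp add: hermite_prod_def zero_mindex_def hermite_eq_poly)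

lemma integral_hermite_prod_eq_0:
  assumes "\<alpha> \<in> mindex_set d p n" "\<alpha> \<noteq> zero_mindex"
  shows "(\<integral>\<omega>. hermite_prod d n B T \<alpha> \<omega> \<partial>M) = 0"
  using integral_hermite_prod_orthogonal[OF assms(1) zero_mindex_in_mindex_set assms(2)] by simp

end

section \<open>The dual objective\<close>

locale dual_problem = brownian_grid +
  fixes Z :: "real \<Rightarrow> 'a \<Rightarrow> real" and p :: nat
  assumes integrable_Z: "\<And>t. t \<in> {0..T} \<Longrightarrow> integrable M (Z t)"
begin

abbreviation "mindices \<equiv> mindex_set d p n"
abbreviation "H \<equiv> hermite_prod d n B T"
abbreviation "v \<equiv> v_pn d B T Z p n"
abbreviation "V \<equiv> V_pn M d B T Z p n"

definition nonconst_mindices :: "(nat \<Rightarrow> nat \<Rightarrow> nat) set" where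
  "nonconst_mindices = mindices - {zero_mindex}"

definition hermite_comb :: "((nat \<Rightarrow> nat \<Rightarrow> nat) \<Rightarrow> real) \<Rightarrow> 'a \<Rightarrow> real" where
  "hermite_comb lam \<omega> = (\<Sum>\<alpha>\<in>mindices. lam \<alpha> * H \<alpha> \<omega>)"

definition pathwise_max :: "((nat \<Rightarrow> nat \<Rightarrow> nat) \<Rightarrow> real) \<Rightarrow> 'a \<Rightarrow> real" where
  "pathwise_max lam \<omega> = Max ((\<lambda>k. v lam k \<omega>) ` {0..n})"

definition abs_mean :: "(nat \<Rightarrow> nat \<Rightarrow> nat) \<Rightarrow> real" where
  "abs_mean \<alpha> = (\<integral>\<omega>. \<bar>H \<alpha> \<omega>\<bar> \<partial>M)"

definition neg_part_mean :: "((nat \<Rightarrow> nat \<Rightarrow> nat) \<Rightarrow> real) \<Rightarrow> real" where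
  "neg_part_mean lam = (\<integral>\<omega>. max 0 (- hermite_comb lam \<omega>) \<partial>M)"

lemma V_eq_integral_pathwise_max: "V lam = (\<integral>\<omega>. pathwise_max lam \<omega> \<partial>M)"
  by (simp add: V_pn_def pathwise_max_def)

lemma finite_nonconst_mindices [simp]: "finite nonconst_mindices"
  by (simp add: nonconst_mindices_def finite_mindex_set)

lemma nonconst_mindices_subset: "nonconst_mindices \<subseteq> mindices"
  by (auto simp: nonconst_mindices_def)

lemma integrable_v: "k \<le> n \<Longrightarrow> integrable M (v lam k)"
  using T_pos n_pos unfolding v_pn_def[abs_def]
  by (auto simp: integrable_hermite_prod grid_def field_simps intro!: integrable_Z)

lemma integrable_pathwise_max: "integrable M (pathwise_max lam)"
  unfolding pathwise_max_def[abs_def] by (rule integrable_MAX) (auto intro: integrable_v)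

lemma integrable_hermite_comb: "integrable M (hermite_comb lam)"
  unfolding hermite_comb_def[abs_def] by (auto simp: integrable_hermite_prod)

lemma integrable_abs_diff_bound:
  "integrable M (\<lambda>\<omega>. \<Sum>\<alpha>\<in>mindices. \<bar>lam \<alpha> - mu \<alpha>\<bar> * \<bar>H \<alpha> \<omega>\<bar>)"
  by (auto simp: integrable_hermite_prod)

lemma integral_abs_diff_bound:
  "(\<integral>\<omega>. (\<Sum>\<alpha>\<in>mindices. \<bar>lam \<alpha> - mu \<alpha>\<bar> * \<bar>H \<alpha> \<omega>\<bar>) \<partial>M) =
     (\<Sum>\<alpha>\<in>mindices. \<bar>lam \<alpha> - mu \<alpha>\<bar> * abs_mean \<alpha>)"
  by (simp add: abs_mean_def integrable_hermite_prod)

lemma abs_hermite_sum_diff_le: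
  assumes "S \<subseteq> mindices"
  shows "\<bar>(\<Sum>\<alpha>\<in>S. lam \<alpha> * H \<alpha> \<omega>) - (\<Sum>\<alpha>\<in>S. mu \<alpha> * H \<alpha> \<omega>)\<bar> \<le>
           (\<Sum>\<alpha>\<in>mindices. \<bar>lam \<alpha> - mu \<alpha>\<bar> * \<bar>H \<alpha> \<omega>\<bar>)"
proof -
  have "\<bar>(\<Sum>\<alpha>\<in>S. lam \<alpha> * H \<alpha> \<omega>) - (\<Sum>\<alpha>\<in>S. mu \<alpha> * H \<alpha> \<omega>)\<bar> \<le>
        (\<Sum>\<alpha>\<in>S. \<bar>lam \<alpha> - mu \<alpha>\<bar> * \<bar>H \<alpha> \<omega>\<bar>)"
    unfolding sum_subtractf[symmetric] left_diff_distrib[symmetric]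
    by (rule order_trans[OF sum_abs]) (simp add: abs_mult)
  also have "\<dots> \<le> (\<Sum>\<alpha>\<in>mindices. \<bar>lam \<alpha> - mu \<alpha>\<bar> * \<bar>H \<alpha> \<omega>\<bar>)"
    using assms by (intro sum_mono2 finite_mindex_set) auto
  finally show ?thesis .
qed

lemma pathwise_max_le:
  "pathwise_max lam \<omega> \<le> pathwise_max mu \<omega> + (\<Sum>\<alpha>\<in>mindices. \<bar>lam \<alpha> - mu \<alpha>\<bar> * \<bar>H \<alpha> \<omega>\<bar>)"
  unfolding pathwise_max_def[of lam]
proof (subst Max_le_iff, safe)
  fix k assume "k \<in> {0..n}"
  then have "v mu k \<omega> \<le> pathwise_max mu \<omega>"
    unfolding pathwise_max_def by (intro Max_ge) auto
  moreover have "v lam k \<omega> - v mu k \<omega> \<le> (\<Sum>\<alpha>\<in>mindices. \<bar>lam \<alpha> - mu \<alpha>\<bar> * \<bar>H \<alpha> \<omega>\<bar>)"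
    using abs_hermite_sum_diff_le[OF mindex_set_k_subset[of d p n k], of lam \<omega> mu]
    by (simp add: v_pn_def abs_le_iff)
  ultimately show "v lam k \<omega> \<le> pathwise_max mu \<omega> + (\<Sum>\<alpha>\<in>mindices. \<bar>lam \<alpha> - mu \<alpha>\<bar> * \<bar>H \<alpha> \<omega>\<bar>)"
    by linarith
qed auto

lemma V_lipschitz: "\<bar>V lam - V mu\<bar> \<le> (\<Sum>\<alpha>\<in>mindices. \<bar>lam \<alpha> - mu \<alpha>\<bar> * abs_mean \<alpha>)"
proof -
  have "V lam \<le> V mu + (\<Sum>\<alpha>\<in>mindices. \<bar>lam \<alpha> - mu \<alpha>\<bar> * abs_mean \<alpha>)" for lam mu
  proof -
    have "V lam \<le> (\<integral>\<omega>. pathwise_max mu \<omega> + (\<Sum>\<alpha>\<in>mindices. \<bar>lam \<alpha> - mu \<alpha>\<bar> * \<bar>H \<alpha> \<omega>\<bar>) \<partial>M)"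
      unfolding V_eq_integral_pathwise_max
      by (intro integral_mono pathwise_max_le integrable_pathwise_max Bochner_Integration.integrable_add
                integrable_abs_diff_bound)
    then show ?thesis
      by (simp add: integrable_pathwise_max integrable_abs_diff_bound integral_abs_diff_bound
                    V_eq_integral_pathwise_max)
  qed
  from this[of lam mu] this[of mu lam] show ?thesis
    by (simp add: abs_minus_commute abs_le_iff)
qed

lemma V_cong: "(\<And>\<alpha>. \<alpha> \<in> mindices \<Longrightarrow> lam \<alpha> = mu \<alpha>) \<Longrightarrow> V lam = V mu"
  using V_lipschitz[of lam mu] by simp

text \<open>The dual objective sees \<open>Z\<^sub>0\<close> at \<open>k = 0\<close> and \<open>Z\<^sub>T\<close> minus the full Hermite combination at \<open>k = n\<close>.\<close>
lemma V_lower_bound: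
  assumes "lam zero_mindex = 0"
  shows "neg_part_mean lam - ((\<integral>\<omega>. \<bar>Z 0 \<omega>\<bar> \<partial>M) + (\<integral>\<omega>. \<bar>Z T \<omega>\<bar> \<partial>M)) \<le> V lam"
proof -
  have Z0: "integrable M (Z 0)" and ZT: "integrable M (Z T)"
    using T_pos by (simp_all add: integrable_Z)
  have "max 0 (- hermite_comb lam \<omega>) - (\<bar>Z 0 \<omega>\<bar> + \<bar>Z T \<omega>\<bar>) \<le> pathwise_max lam \<omega>" for \<omega>
  proof -
    have "v lam 0 \<omega> \<le> pathwise_max lam \<omega>" "v lam n \<omega> \<le> pathwise_max lam \<omega>"
      unfolding pathwise_max_def by (intro Max_ge; simp)+
    moreover have "v lam 0 \<omega> = Z 0 \<omega>" "v lam n \<omega> = Z T \<omega> - hermite_comb lam \<omega>"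
      using assms n_pos
      by (simp_all add: v_pn_def mindex_set_k_0 mindex_set_k_self hermite_comb_def grid_def)
    ultimately show ?thesis
      by (auto simp: max_def)
  qed
  then have "(\<integral>\<omega>. max 0 (- hermite_comb lam \<omega>) - (\<bar>Z 0 \<omega>\<bar> + \<bar>Z T \<omega>\<bar>) \<partial>M) \<le> V lam"
    unfolding V_eq_integral_pathwise_max
    by (intro integral_mono integrable_pathwise_max) (auto simp: Z0 ZT integrable_hermite_comb)
  then show ?thesis
    by (simp add: neg_part_mean_def Z0 ZT integrable_hermite_comb)
qed

lemma integral_hermite_comb_eq_0:
  assumes "lam zero_mindex = 0"
  shows "(\<integral>\<omega>. hermite_comb lam \<omega> \<partial>M) = 0"
proof -
  have "(\<integral>\<omega>. hermite_comb lam \<omega> \<partial>M) = (\<Sum>\<alpha>\<in>mindices. lam \<alpha> * (\<integral>\<omega>. H \<alpha> \<omega> \<partial>M))"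
    by (simp add: hermite_comb_def integrable_hermite_prod)
  also have "\<dots> = 0"
  proof (intro sum.neutral ballI)
    fix \<alpha> assume "\<alpha> \<in> mindices"
    then show "lam \<alpha> * (\<integral>\<omega>. H \<alpha> \<omega> \<partial>M) = 0"
      using assms by (cases "\<alpha> = zero_mindex") (simp_all add: integral_hermite_prod_eq_0)
  qed
  finally show ?thesis .
qed

lemma integral_hermite_comb_mult_hermite_prod:
  assumes "\<beta> \<in> mindices"
  shows "(\<integral>\<omega>. hermite_comb lam \<omega> * H \<beta> \<omega> \<partial>M) = lam \<beta> * (\<integral>\<omega>. H \<beta> \<omega> * H \<beta> \<omega> \<partial>M)"
proof -
  have "(\<integral>\<omega>. hermite_comb lam \<omega> * H \<beta> \<omega> \<partial>M) = (\<Sum>\<alpha>\<in>mindices. lam \<alpha> * (\<integral>\<omega>. H \<alpha> \<omega> * H \<beta> \<omega> \<partial>M))"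
    by (simp add: hermite_comb_def sum_distrib_right mult.assoc integrable_hermite_prod_mult)
  also have "\<dots> = (\<Sum>\<alpha>\<in>mindices. if \<alpha> = \<beta> then lam \<beta> * (\<integral>\<omega>. H \<beta> \<omega> * H \<beta> \<omega> \<partial>M) else 0)"
    using assms by (intro sum.cong refl) (auto simp: integral_hermite_prod_orthogonal)
  also have "\<dots> = lam \<beta> * (\<integral>\<omega>. H \<beta> \<omega> * H \<beta> \<omega> \<partial>M)"
    using assms by (simp add: finite_mindex_set)
  finally show ?thesis .
qed

text \<open>A centred random variable with vanishing negative part vanishes a.s.; orthogonality of the
  Hermite products then forces all coefficients to vanish.\<close>
lemma neg_part_mean_pos:
  assumes "lam zero_mindex = 0" and "\<beta> \<in> mindices" "lam \<beta> \<noteq> 0"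
  shows "neg_part_mean lam > 0"
proof (rule ccontr)
  assume "\<not> ?thesis"
  moreover have "neg_part_mean lam \<ge> 0"
    unfolding neg_part_mean_def by (intro Bochner_Integration.integral_nonneg) simp
  ultimately have "AE \<omega> in M. max 0 (- hermite_comb lam \<omega>) = 0"
    unfolding neg_part_mean_def
    by (subst integral_nonneg_eq_0_iff_AE[symmetric]) (auto simp: integrable_hermite_comb)
  then have "AE \<omega> in M. 0 \<le> hermite_comb lam \<omega>"
    by eventually_elim (simp add: max_def split: if_splits)
  then have "AE \<omega> in M. hermite_comb lam \<omega> = 0"
    using integral_nonneg_eq_0_iff_AE[OF integrable_hermite_comb] integral_hermite_comb_eq_0[of lam, OF assms(1)]
    by simp
  then have "AE \<omega> in M. hermite_comb lam \<omega> * H \<beta> \<omega> = 0"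
    by eventually_elim simp
  then have "lam \<beta> * (\<integral>\<omega>. H \<beta> \<omega> * H \<beta> \<omega> \<partial>M) = 0"
    using integral_hermite_comb_mult_hermite_prod[OF assms(2)] integral_eq_zero_AE by metis
  then show False
    using assms(3) integral_hermite_prod_square_pos[of \<beta>] by simp
qed

lemma neg_part_mean_lipschitz:
  "\<bar>neg_part_mean lam - neg_part_mean mu\<bar> \<le> (\<Sum>\<alpha>\<in>mindices. \<bar>lam \<alpha> - mu \<alpha>\<bar> * abs_mean \<alpha>)"
proof -
  have "\<bar>neg_part_mean lam - neg_part_mean mu\<bar> \<le>
        (\<integral>\<omega>. \<bar>max 0 (- hermite_comb lam \<omega>) - max 0 (- hermite_comb mu \<omega>)\<bar> \<partial>M)"
    unfolding neg_part_mean_def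
    using integral_norm_bound[of M "\<lambda>\<omega>. max 0 (- hermite_comb lam \<omega>) - max 0 (- hermite_comb mu \<omega>)"]
    by (simp add: integrable_hermite_comb)
  also have "\<dots> \<le> (\<integral>\<omega>. (\<Sum>\<alpha>\<in>mindices. \<bar>lam \<alpha> - mu \<alpha>\<bar> * \<bar>H \<alpha> \<omega>\<bar>) \<partial>M)"
  proof (intro integral_mono integrable_abs_diff_bound)
    fix \<omega>
    have "\<bar>max 0 (- hermite_comb lam \<omega>) - max 0 (- hermite_comb mu \<omega>)\<bar> \<le>
          \<bar>hermite_comb lam \<omega> - hermite_comb mu \<omega>\<bar>"
      by (simp add: max_def abs_if)
    then show "\<bar>max 0 (- hermite_comb lam \<omega>) - max 0 (- hermite_comb mu \<omega>)\<bar> \<le>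
          (\<Sum>\<alpha>\<in>mindices. \<bar>lam \<alpha> - mu \<alpha>\<bar> * \<bar>H \<alpha> \<omega>\<bar>)"
      using abs_hermite_sum_diff_le[of mindices lam \<omega> mu] by (simp add: hermite_comb_def)
  qed (auto simp: integrable_hermite_comb)
  finally show ?thesis
    by (simp add: integral_abs_diff_bound)
qed

lemma neg_part_mean_scale:
  assumes "t \<ge> 0"
  shows "neg_part_mean (\<lambda>\<alpha>. t * lam \<alpha>) = t * neg_part_mean lam"
proof -
  have "max 0 (- (t * y)) = t * max 0 (- y)" for y :: real
    using assms by (cases "y \<ge> 0") (auto simp: max_def mult_le_0_iff zero_le_mult_iff)
  then show ?thesis
    by (simp add: neg_part_mean_def hermite_comb_def mult.assoc flip: sum_distrib_left)
qed

lemma continuous_on_zero_outside: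
  assumes "\<And>lam mu. \<bar>F lam - F mu\<bar> \<le> (\<Sum>\<alpha>\<in>mindices. \<bar>lam \<alpha> - mu \<alpha>\<bar> * abs_mean \<alpha>)"
  shows "continuous_on UNIV (\<lambda>l. F (zero_outside nonconst_mindices l))"
proof (rule continuous_on_weighted_l1_lipschitz[where S = nonconst_mindices and w = abs_mean])
  fix l m :: "(nat \<Rightarrow> nat \<Rightarrow> nat) \<Rightarrow> real"
  have "\<bar>F (zero_outside nonconst_mindices l) - F (zero_outside nonconst_mindices m)\<bar> \<le>
        (\<Sum>\<alpha>\<in>mindices. \<bar>zero_outside nonconst_mindices l \<alpha> - zero_outside nonconst_mindices m \<alpha>\<bar> * abs_mean \<alpha>)"
    by (rule assms)
  also have "\<dots> = (\<Sum>a\<in>nonconst_mindices. abs_mean a * \<bar>l a - m a\<bar>)"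
    by (rule sum_abs_diff_zero_outside[OF finite_mindex_set nonconst_mindices_subset])
  finally show "\<bar>F (zero_outside nonconst_mindices l) - F (zero_outside nonconst_mindices m)\<bar> \<le>
                (\<Sum>a\<in>nonconst_mindices. abs_mean a * \<bar>l a - m a\<bar>)" .
qed

lemma neg_part_mean_ge_l1_norm:
  "\<exists>c>0. \<forall>l. c * (\<Sum>a\<in>nonconst_mindices. \<bar>l a\<bar>) \<le> neg_part_mean (zero_outside nonconst_mindices l)"
proof (rule positive_homogeneous_ge_l1_norm[OF finite_nonconst_mindices])
  show "continuous_on UNIV (\<lambda>l. neg_part_mean (zero_outside nonconst_mindices l))"
    by (rule continuous_on_zero_outside[OF neg_part_mean_lipschitz])
next
  fix t :: real and l :: "(nat \<Rightarrow> nat \<Rightarrow> nat) \<Rightarrow> real" assume "t \<ge> 0"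
  moreover have "zero_outside nonconst_mindices (\<lambda>a. t * l a) = (\<lambda>a. t * zero_outside nonconst_mindices l a)"
    by (simp add: zero_outside_def fun_eq_iff)
  ultimately show "neg_part_mean (zero_outside nonconst_mindices (\<lambda>a. t * l a)) =
                   t * neg_part_mean (zero_outside nonconst_mindices l)"
    by (simp add: neg_part_mean_scale)
next
  fix l :: "(nat \<Rightarrow> nat \<Rightarrow> nat) \<Rightarrow> real" assume "\<exists>a\<in>nonconst_mindices. l a \<noteq> 0"
  then obtain a where "a \<in> nonconst_mindices" "l a \<noteq> 0" by blast
  then show "neg_part_mean (zero_outside nonconst_mindices l) > 0"
    using nonconst_mindices_subset
    by (intro neg_part_mean_pos[where \<beta> = a]) (auto simp: zero_outside_def nonconst_mindices_def)
qed simp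

lemma V_coercive:
  "\<exists>c>0. \<exists>C. \<forall>l. c * (\<Sum>a\<in>nonconst_mindices. \<bar>l a\<bar>) - C \<le> V (zero_outside nonconst_mindices l)"
proof -
  obtain c where "c > 0" and c:
    "\<And>l. c * (\<Sum>a\<in>nonconst_mindices. \<bar>l a\<bar>) \<le> neg_part_mean (zero_outside nonconst_mindices l)"
    using neg_part_mean_ge_l1_norm by blast
  have off: "zero_outside nonconst_mindices l zero_mindex = 0" for l
    by (simp add: zero_outside_def nonconst_mindices_def)
  have "c * (\<Sum>a\<in>nonconst_mindices. \<bar>l a\<bar>) - ((\<integral>\<omega>. \<bar>Z 0 \<omega>\<bar> \<partial>M) + (\<integral>\<omega>. \<bar>Z T \<omega>\<bar> \<partial>M))
          \<le> V (zero_outside nonconst_mindices l)" for l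
    using V_lower_bound[of "zero_outside nonconst_mindices l", OF off] c[of l] by linarith
  with \<open>c > 0\<close> show ?thesis
    by blast
qed

lemma V_attains_min:
  "\<exists>lam. lam zero_mindex = 0 \<and> (\<forall>mu. mu zero_mindex = 0 \<longrightarrow> V lam \<le> V mu)"
proof -
  obtain c C where c: "c > 0" and coercive:
    "\<And>l. c * (\<Sum>a\<in>nonconst_mindices. \<bar>l a\<bar>) - C \<le> V (zero_outside nonconst_mindices l)"
    using V_coercive by blast
  obtain l0 where l0: "\<And>a. a \<notin> nonconst_mindices \<Longrightarrow> l0 a = 0"
    "\<And>l. V (zero_outside nonconst_mindices l0) \<le> V (zero_outside nonconst_mindices l)"
    by (rule coercive_attains_min[where F = "\<lambda>l. V (zero_outside nonconst_mindices l)",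
          OF finite_nonconst_mindices _ continuous_on_zero_outside[OF V_lipschitz] coercive c]) (simp, blast)
  have "V l0 \<le> V mu" if "mu zero_mindex = 0" for mu
  proof -
    have "V mu = V (zero_outside nonconst_mindices mu)"
      using that by (intro V_cong) (auto simp: zero_outside_def nonconst_mindices_def)
    then show ?thesis
      using l0(2)[of mu] zero_outside_eq_self[of nonconst_mindices l0, OF l0(1)] by simp
  qed
  moreover have "l0 zero_mindex = 0"
    using l0(1) by (simp add: nonconst_mindices_def)
  ultimately show ?thesis by blast
qed

end

lemma subalgebra_BM_filtration:
  assumes "\<And>j s. j < d \<Longrightarrow> s \<in> {0..t} \<Longrightarrow> B j s \<in> borel_measurable M"
  shows "subalgebra M (BM_filtration M d B t)"
proof -
  let ?G = "{B j s -` A \<inter> space M | j s A. j < d \<and> s \<in> {0..t} \<and> A \<in> sets borel} \<union> null_sets M"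
  have "?G \<subseteq> sets M"
    using assms by (auto intro: measurable_sets)
  moreover from this have "?G \<subseteq> Pow (space M)"
    using sets.sets_into_space by blast
  ultimately show ?thesis
    unfolding subalgebra_def BM_filtration_def
    by (simp add: sets.sigma_sets_subset)
qed

lemma ennreal_le_1_plus_square: "(x :: ennreal) \<le> 1 + x ^ 2"
proof (cases "x \<le> 1")
  case True
  then show ?thesis
    by (metis add_increasing2 zero_le)
next
  case False
  then have "x * 1 \<le> x * x"
    by (intro mult_left_mono) auto
  then show ?thesis
    by (metis add.commute add_increasing2 zero_le power2_eq_square mult_1_right)
qed

lemma (in finite_measure) integrable_if_dominated_by_L2:
  assumes "S \<in> borel_measurable M" "(\<integral>\<^sup>+\<omega>. S \<omega> ^ 2 \<partial>M) < \<infinity>"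
    and "f \<in> borel_measurable M" "\<And>\<omega>. ennreal \<bar>f \<omega>\<bar> \<le> S \<omega>"
  shows "integrable M f"
proof (rule integrableI_bounded)
  have "(\<integral>\<^sup>+\<omega>. ennreal (norm (f \<omega>)) \<partial>M) \<le> (\<integral>\<^sup>+\<omega>. 1 + S \<omega> ^ 2 \<partial>M)"
    using assms(4) ennreal_le_1_plus_square
    by (intro nn_integral_mono) (metis order_trans real_norm_def)
  also have "\<dots> = emeasure M (space M) + (\<integral>\<^sup>+\<omega>. S \<omega> ^ 2 \<partial>M)"
    using assms(1) by (subst nn_integral_add) auto
  also have "\<dots> < \<infinity>"
    using assms(2) by (simp add: less_top[symmetric])
  finally show "(\<integral>\<^sup>+\<omega>. ennreal (norm (f \<omega>)) \<partial>M) < \<infinity>" .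
qed (rule assms(3))

theorem proposition3p1:
  fixes M :: "'a measure" and d n p :: nat and T :: real
    and B :: "nat \<Rightarrow> real \<Rightarrow> 'a \<Rightarrow> real" and Z :: "real \<Rightarrow> 'a \<Rightarrow> real"
  assumes "prob_space M"
    and "T > 0" and "d \<ge> 1"
    and "std_BM M d T B"
    and "\<forall>t\<in>{0..T}. Z t \<in> borel_measurable (BM_filtration M d B t)"
    and "\<forall>\<omega>\<in>space M. \<forall>t\<in>{0..T}. continuous (at t within {t..T}) (\<lambda>s. Z s \<omega>)"
    and "(\<lambda>\<omega>. SUP t\<in>{0..T}. ennreal \<bar>Z t \<omega>\<bar>) \<in> borel_measurable M"
    and "(\<integral>\<^sup>+\<omega>. (SUP t\<in>{0..T}. ennreal \<bar>Z t \<omega>\<bar>) ^ 2 \<partial>M) < \<infinity>"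
    and "p \<ge> 1" and "n \<ge> 1"
  shows "\<exists>lam. lam zero_mindex = 0 \<and>
           (\<forall>\<mu>. \<mu> zero_mindex = 0 \<longrightarrow> V_pn M d B T Z p n lam \<le> V_pn M d B T Z p n \<mu>)"
proof -
  interpret brownian_grid M d n T B
    using assms(1,2,4,10) by (simp add: brownian_grid_def brownian_grid_axioms_def)
  have "integrable M (Z t)" if t: "t \<in> {0..T}" for t
  proof (rule integrable_if_dominated_by_L2[OF assms(7,8)])
    have "subalgebra M (BM_filtration M d B t)"
      using brownian t by (intro subalgebra_BM_filtration) (auto simp: std_BM_def)
    then show "Z t \<in> borel_measurable M"
      using assms(5) t measurable_from_subalg by blast
    show "ennreal \<bar>Z t \<omega>\<bar> \<le> (SUP t\<in>{0..T}. ennreal \<bar>Z t \<omega>\<bar>)" for \<omega>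
      using t by (rule SUP_upper)
  qed
  then interpret dual_problem M d n T B Z p
    by unfold_locales
  show ?thesis
    by (rule V_attains_min)
qed

end
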